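(* Let $m\ge0$ be an integer and write $s_n=s_n^{(1,m+2)}$. Then for all $n\ge0$, \[ s_n^2=\delta_{n,0}+s_{n-1}^2+s_{n-m-2}^2+2\sum_{l=m+2}^n P_{l-1}^{\{-2,-1,m\}}s_{n-l}^2 . \]
   Context: For positive integers $p<q$, $s_n^{(p,q)}$ is defined by $s_n^{(p,q)}=\delta_{0,n}+s_{n-p}^{(p,q)}+s_{n-q}^{(p,q)}$ for $n\ge0$ and $s_n^{(p,q)}=0$ for $n<0$. $\delta_{i,j}$ is $1$ if $i=j$ and $0$ otherwise. For a finite set $W$ of integers, $P_n^W$ is the number of permutations $\pi$ of $\{1,\dots,n\}$ with $\pi(i)-i\in W$ for all $i$ (the permanent of the $n\times n$ $(0,1)$ Toeplitz matrix whose $(i,j)$ entry is $1$ iff $j-i\in W$), with $P_0^W=1$. Empty sums are $0$. *)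

theory Defs
  imports Main "HOL-Combinatorics.Permutations"
begin

text \<open>Well-defined (terminating) for positive p, q; the guards 0 < p, 0 < q only matter outside that range.\<close>
function sseq :: "nat \<Rightarrow> nat \<Rightarrow> int \<Rightarrow> nat" where
  "sseq p q n = (if n < 0 then 0 else
      (if n = 0 then 1 else 0)
      + (if 0 < p then sseq p q (n - int p) else 0)
      + (if 0 < q then sseq p q (n - int q) else 0))"
  by auto
termination
  by (relation "measure (\<lambda>(p, q, n). nat (n + 1))") auto

definition Pperm :: "int set \<Rightarrow> nat \<Rightarrow> nat" where
  "Pperm W n = card {\<pi>. \<pi> permutes {1..n} \<and> (\<forall>i\<in>{1..n}. int (\<pi> i) - int i \<in> W)}"

end

theory Submission
  imports Defs
begin

(* Write s for s^(1,m+2). Since s_n = s_(n-1) + s_(n-m-2) for n > 0, the claim amounts to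
   expanding the cross term s_(n-1) s_(n-m-2). For 0 <= e <= m let a_e(j) = hole_count m e j be
   the number of injections of {1..j} onto {0..j} - {e} whose displacements lie in {-2, -1, m}.
   Then
     s_k s_(k-e-1) = sum_j a_e(j) s_(k-1-j)^2,
   because both sides obey the same recursion: on the left, expand s_k by its recurrence; on the
   right, classify the injections by the displacement of the point 1. Finally a_m(j) = a_0(j+1)
   = P_(j+1), which turns the case e = m into the sum of the theorem. *)

declare sseq.simps [simp del]

(* A word ws over W encodes the map i |-> i + ws!(i-1) on {1..length ws}, with displacements
   in W; targets ws lists its values. placements W S n counts the words of length n encoding an
   injection with image S. *)
fun targets :: "int list \<Rightarrow> int list" where
  "targets [] = []"
| "targets (w # ws) = (1 + w) # map (\<lambda>x. x + 1) (targets ws)"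

lemma length_targets [simp]: "length (targets ws) = length ws"
  by (induction ws) auto

lemma nth_targets: "i < length ws \<Longrightarrow> targets ws ! i = int i + 1 + ws ! i"
  by (induction ws arbitrary: i) (auto simp: nth_Cons split: nat.splits)

lemma targets_Cons_iff:
  "distinct (targets (w # ws)) \<and> set (targets (w # ws)) = S \<longleftrightarrow>
   1 + w \<in> S \<and> distinct (targets ws) \<and> set (targets ws) = (\<lambda>x. x - 1) ` (S - {1 + w})"
proof -
  have "distinct (targets (w # ws)) \<longleftrightarrow> w \<notin> set (targets ws) \<and> distinct (targets ws)"
    by (auto simp: distinct_map inj_on_def)
  moreover have "set (targets (w # ws)) = insert (1 + w) ((\<lambda>x. x + 1) ` set (targets ws))"
    by simp
  ultimately show ?thesis
    by (auto simp: image_iff)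
qed

definition placement_words :: "int set \<Rightarrow> int set \<Rightarrow> nat \<Rightarrow> int list set" where
  "placement_words W S n =
     {ws. length ws = n \<and> set ws \<subseteq> W \<and> distinct (targets ws) \<and> set (targets ws) = S}"

definition placements :: "int set \<Rightarrow> int set \<Rightarrow> nat \<Rightarrow> nat" where
  "placements W S n = card (placement_words W S n)"

lemma finite_placement_words: "finite W \<Longrightarrow> finite (placement_words W S n)"
  by (rule finite_subset[OF _ finite_lists_length_eq[of W n]]) (auto simp: placement_words_def)

lemma placements_0: "placements W S 0 = (if S = {} then 1 else 0)"
proof -
  have "placement_words W S 0 = (if S = {} then {[]} else {})"
    by (auto simp: placement_words_def)
  then show ?thesis
    by (simp add: placements_def)
qed

lemma placement_words_Suc:
  "placement_words W S (Suc n) =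
     (\<Union>w\<in>{w\<in>W. 1 + w \<in> S}. (#) w ` placement_words W ((\<lambda>x. x - 1) ` (S - {1 + w})) n)"
proof (intro set_eqI)
  fix xs
  show "xs \<in> placement_words W S (Suc n) \<longleftrightarrow>
    xs \<in> (\<Union>w\<in>{w\<in>W. 1 + w \<in> S}. (#) w ` placement_words W ((\<lambda>x. x - 1) ` (S - {1 + w})) n)"
    by (cases xs)
      (use targets_Cons_iff in \<open>auto simp: placement_words_def simp del: targets.simps\<close>)
qed

lemma placements_Suc:
  assumes "finite W"
  shows "placements W S (Suc n) =
    (\<Sum>w\<in>W. if 1 + w \<in> S then placements W ((\<lambda>x. x - 1) ` (S - {1 + w})) n else 0)"
proof -
  have "placements W S (Suc n) =
      (\<Sum>w\<in>{w\<in>W. 1 + w \<in> S}. card ((#) w ` placement_words W ((\<lambda>x. x - 1) ` (S - {1 + w})) n))"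
    unfolding placements_def placement_words_Suc
    by (rule card_UN_disjoint) (auto simp: assms finite_placement_words)
  also have "\<dots> = (\<Sum>w\<in>{w\<in>W. 1 + w \<in> S}. placements W ((\<lambda>x. x - 1) ` (S - {1 + w})) n)"
    by (simp add: placements_def card_image)
  finally show ?thesis
    by (simp add: sum.inter_filter assms)
qed

lemma targets_ge: "set ws \<subseteq> {b..} \<Longrightarrow> y \<in> set (targets ws) \<Longrightarrow> b + 1 \<le> y"
  by (induction ws arbitrary: y b) force+

lemma placements_eq_0_if_below:
  assumes "W \<subseteq> {b..}" "x \<in> S" "x \<le> b"
  shows "placements W S n = 0"
proof -
  have "placement_words W S n = {}"
    using targets_ge assms by (fastforce simp: placement_words_def)
  then show ?thesis
    by (simp add: placements_def)
qed

lemma placements_eq_0_if_card_neq: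
  assumes "card S \<noteq> n"
  shows "placements W S n = 0"
proof -
  have "placement_words W S n = {}"
    using assms distinct_card by (fastforce simp: placement_words_def)
  then show ?thesis
    by (simp add: placements_def)
qed

definition displacement_word :: "nat \<Rightarrow> (nat \<Rightarrow> nat) \<Rightarrow> int list" where
  "displacement_word N \<pi> = map (\<lambda>i. int (\<pi> (Suc i)) - int (Suc i)) [0..<N]"

definition word_permutation :: "nat \<Rightarrow> int list \<Rightarrow> nat \<Rightarrow> nat" where
  "word_permutation N ws = restrict_id (\<lambda>i. nat (targets ws ! (i - 1))) {1..N}"

lemma targets_displacement_word:
  "targets (displacement_word N \<pi>) = map (\<lambda>i. int (\<pi> (Suc i))) [0..<N]"
  by (rule nth_equalityI) (auto simp: displacement_word_def nth_targets)

lemma displacement_word_in_placement_words: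
  assumes "\<pi> permutes {1..N}" "\<forall>i\<in>{1..N}. int (\<pi> i) - int i \<in> W"
  shows "displacement_word N \<pi> \<in> placement_words W {1..int N} N"
proof -
  have "inj_on (\<lambda>i. int (\<pi> (Suc i))) {0..<N}"
  proof (rule inj_onI)
    fix i j assume "i \<in> {0..<N}" "j \<in> {0..<N}" "int (\<pi> (Suc i)) = int (\<pi> (Suc j))"
    then show "i = j"
      using permutes_inj_on[OF assms(1)] inj_onD[of \<pi> "{1..N}" "Suc i" "Suc j"] by simp
  qed
  then have "distinct (targets (displacement_word N \<pi>))"
    by (simp add: targets_displacement_word distinct_map)
  moreover have "set (targets (displacement_word N \<pi>)) = int ` \<pi> ` Suc ` {0..<N}"
    by (simp only: targets_displacement_word set_map set_upt image_image)
  moreover have "Suc ` {0..<N} = {1..N}"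
    by (simp add: image_Suc_atLeastLessThan atLeastLessThanSuc_atLeastAtMost)
  moreover have "set (displacement_word N \<pi>) \<subseteq> W"
    using assms(2) by (force simp: displacement_word_def simp del: of_nat_Suc)
  ultimately show ?thesis
    using assms(1)
    by (simp add: placement_words_def displacement_word_def permutes_image image_int_atLeastAtMost)
qed

lemma nth_targets_mem:
  assumes "ws \<in> placement_words W {1..int N} N" "i \<in> {1..N}"
  shows "targets ws ! (i - 1) \<in> {1..int N}"
  using assms nth_mem[of "i - 1" "targets ws"] by (auto simp: placement_words_def)

lemma int_word_permutation:
  assumes "ws \<in> placement_words W {1..int N} N" "i \<in> {1..N}"
  shows "int (word_permutation N ws i) = targets ws ! (i - 1)"
  using assms nth_targets_mem[OF assms] by (simp add: word_permutation_def)

lemma word_permutation_permutes: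
  assumes ws: "ws \<in> placement_words W {1..int N} N"
  shows "word_permutation N ws permutes {1..N}"
proof -
  let ?ts = "targets ws" and ?\<pi> = "word_permutation N ws"
  have "inj_on ?\<pi> {1..N}"
  proof (rule inj_onI)
    fix i j assume ij: "i \<in> {1..N}" "j \<in> {1..N}" "?\<pi> i = ?\<pi> j"
    then have "?ts ! (i - 1) = ?ts ! (j - 1)"
      using int_word_permutation[OF ws ij(1)] int_word_permutation[OF ws ij(2)] by simp
    then have "i - 1 = j - 1"
      using ij(1,2) ws by (subst (asm) nth_eq_iff_index_eq) (auto simp: placement_words_def)
    then show "i = j"
      using ij by auto
  qed
  moreover have "?\<pi> ` {1..N} \<subseteq> {1..N}"
  proof (rule image_subsetI)
    fix i assume "i \<in> {1..N}"
    then show "?\<pi> i \<in> {1..N}"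
      using nth_targets_mem[OF ws] int_word_permutation[OF ws] by force
  qed
  ultimately have "bij_betw ?\<pi> {1..N} {1..N}"
    by (metis bij_betw_def endo_inj_surj finite_atLeastAtMost)
  then show ?thesis
    by (rule bij_imp_permutes) (simp add: word_permutation_def)
qed

lemma word_permutation_displacements:
  assumes ws: "ws \<in> placement_words W {1..int N} N"
  shows "\<forall>i\<in>{1..N}. int (word_permutation N ws i) - int i \<in> W"
  using ws int_word_permutation[OF ws] nth_targets[of _ ws] nth_mem[of _ ws]
  by (fastforce simp: placement_words_def)

lemma displacement_word_word_permutation:
  assumes ws: "ws \<in> placement_words W {1..int N} N"
  shows "displacement_word N (word_permutation N ws) = ws"
  using ws int_word_permutation[OF ws]
  by (intro nth_equalityI) (auto simp: placement_words_def displacement_word_def nth_targets)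

lemma word_permutation_displacement_word:
  assumes "\<pi> permutes {1..N}"
  shows "word_permutation N (displacement_word N \<pi>) = \<pi>"
proof
  fix i
  show "word_permutation N (displacement_word N \<pi>) i = \<pi> i"
    using permutes_not_in[OF assms, of i]
    by (cases i) (auto simp: word_permutation_def restrict_id_def targets_displacement_word)
qed

lemma Pperm_eq_placements: "Pperm W N = placements W {1..int N} N"
proof -
  define P where "P = {\<pi>. \<pi> permutes {1..N} \<and> (\<forall>i\<in>{1..N}. int (\<pi> i) - int i \<in> W)}"
  define T where "T = placement_words W {1..int N} N"
  have "bij_betw (displacement_word N) P T"
  proof (rule bij_betw_byWitness[where f' = "word_permutation N"])
    show "\<forall>\<pi>\<in>P. word_permutation N (displacement_word N \<pi>) = \<pi>"
      unfolding P_def using word_permutation_displacement_word by blast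
    show "\<forall>ws\<in>T. displacement_word N (word_permutation N ws) = ws"
      unfolding T_def using displacement_word_word_permutation by blast
    show "displacement_word N ` P \<subseteq> T"
      unfolding P_def T_def using displacement_word_in_placement_words by blast
    show "word_permutation N ` T \<subseteq> P"
      unfolding P_def T_def using word_permutation_permutes word_permutation_displacements by blast
  qed
  then show ?thesis
    unfolding Pperm_def placements_def P_def T_def by (rule bij_betw_same_card)
qed

lemma image_diff_right_eq: "(\<lambda>x. x - c) ` A = {x. x + c \<in> A}" for c :: "'a::ab_group_add"
  by (auto simp: image_iff) (metis add_diff_cancel)

(* The target -1 can only be reached from the point 1, by displacement -2, and the
   remaining problem has the same shape until the first hole x has been passed. *)
lemma placements_two_holes:
  assumes "finite W" "W \<subseteq> {-2..}" "-2 \<in> W" "x < y"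
  shows "placements W ({-1..int n} - {int x, int y}) n =
    (if x < n then placements W ({0..int (n - x - 1)} - {int (y - x - 1)}) (n - x - 1) else 0)"
  using assms(4)
proof (induction n arbitrary: x y)
  case 0
  have "-1 \<in> {-1..int 0} - {int x, int y}"
    by auto
  then have "{-1..int 0} - {int x, int y} \<noteq> {}"
    by blast
  then show ?case
    by (simp add: placements_0)
next
  case (Suc n)
  define S where "S = {-1..int (Suc n)} - {int x, int y}"
  have others: "placements W ((\<lambda>x. x - 1) ` (S - {1 + w})) n = 0" if "w \<noteq> -2" for w
  proof (rule placements_eq_0_if_below[OF assms(2)])
    show "-2 \<in> (\<lambda>x. x - 1) ` (S - {1 + w})"
      using that by (force simp: S_def image_iff)
  qed simp
  have "placements W S (Suc n) =
      (\<Sum>w\<in>W. if 1 + w \<in> S then placements W ((\<lambda>x. x - 1) ` (S - {1 + w})) n else 0)"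
    by (rule placements_Suc[OF assms(1)])
  also have "\<dots> = (\<Sum>w\<in>{-2}. if 1 + w \<in> S then placements W ((\<lambda>x. x - 1) ` (S - {1 + w})) n else 0)"
    by (rule sum.mono_neutral_right) (use assms(1,3) others in auto)
  also have "\<dots> = placements W ((\<lambda>x. x - 1) ` (S - {-1})) n"
    by (simp add: S_def)
  also have "\<dots> = (if x < Suc n
      then placements W ({0..int (Suc n - x - 1)} - {int (y - x - 1)}) (Suc n - x - 1) else 0)"
  proof (cases x)
    case 0
    have "(\<lambda>x. x - 1) ` (S - {-1}) = {0..int n} - {int (y - 1)}"
      using 0 Suc.prems by (auto simp: S_def image_diff_right_eq)
    then show ?thesis
      using 0 by simp
  next
    case (Suc x')
    have "(\<lambda>x. x - 1) ` (S - {-1}) = {-1..int n} - {int x', int (y - 1)}"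
      using Suc Suc.prems by (auto simp: S_def image_diff_right_eq)
    then show ?thesis
      using Suc Suc.IH[of x' "y - 1"] Suc.prems by simp
  qed
  finally show ?case
    by (simp add: S_def)
qed

definition hole_count :: "nat \<Rightarrow> nat \<Rightarrow> nat \<Rightarrow> nat" where
  "hole_count m e j = placements {-2, -1, int m} ({0..int j} - {int e}) j"

lemma hole_count_0: "hole_count m e 0 = (if e = 0 then 1 else 0)"
  by (auto simp: hole_count_def placements_0)

lemma hole_count_eq_0: "j < e \<Longrightarrow> hole_count m e j = 0"
  unfolding hole_count_def by (rule placements_eq_0_if_card_neq) simp

lemma hole_count_0_Suc: "hole_count m 0 (Suc n) = hole_count m m n"
proof -
  let ?W = "{-2, -1, int m}" and ?S = "{0..int (Suc n)} - {0}"
  have "hole_count m 0 (Suc n) =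
      (if m \<le> n then placements ?W ((\<lambda>x. x - 1) ` (?S - {1 + int m})) n else 0)"
    by (simp add: hole_count_def placements_Suc)
  also have "(\<lambda>x. x - 1) ` (?S - {1 + int m}) = {0..int n} - {int m}"
    by (auto simp: image_diff_right_eq)
  finally show ?thesis
    using hole_count_eq_0[of n m m] by (auto simp: hole_count_def)
qed

lemma hole_count_Suc:
  assumes "1 \<le> e" "e \<le> m"
  shows "hole_count m e (Suc n) =
    hole_count m (e - 1) n + (if e \<le> n then hole_count m (m - e) (n - e) else 0)"
proof -
  let ?W = "{-2, -1, int m}" and ?S = "{0..int (Suc n)} - {int e}"
  have "hole_count m e (Suc n) = placements ?W ((\<lambda>x. x - 1) ` (?S - {0})) n
      + (if m \<le> n then placements ?W ((\<lambda>x. x - 1) ` (?S - {1 + int m})) n else 0)"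
    using assms by (simp add: hole_count_def placements_Suc)
  also have "(\<lambda>x. x - 1) ` (?S - {0}) = {0..int n} - {int (e - 1)}"
    using assms by (auto simp: image_diff_right_eq)
  also have "(\<lambda>x. x - 1) ` (?S - {1 + int m}) = {-1..int n} - {int (e - 1), int m}"
    using assms by (auto simp: image_diff_right_eq)
  also have "placements ?W \<dots> n = (if e \<le> n then hole_count m (m - e) (n - e) else 0)"
  proof -
    have "n - (e - 1) - 1 = n - e" "m - (e - 1) - 1 = m - e" "e - 1 < n \<longleftrightarrow> e \<le> n"
      using assms by auto
    moreover have "e - 1 < m"
      using assms by simp
    ultimately show ?thesis
      unfolding hole_count_def by (subst placements_two_holes) auto
  qed
  finally show ?thesis
    using assms hole_count_eq_0[of "n - e" "m - e" m] by (auto simp: hole_count_def)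
qed

lemma Pperm_eq_hole_count: "Pperm {-2, -1, int m} (Suc n) = hole_count m m n"
proof -
  have "{0..int (Suc n)} - {0} = {1..int (Suc n)}"
    by auto
  then show ?thesis
    using hole_count_0_Suc[of m n] by (simp add: Pperm_eq_placements hole_count_def)
qed

lemma sseq_neg: "n < 0 \<Longrightarrow> sseq p q n = 0"
  by (simp add: sseq.simps)

lemma sseq_0: "0 < p \<Longrightarrow> 0 < q \<Longrightarrow> sseq p q 0 = 1"
  by (simp add: sseq.simps[of p q 0] sseq_neg)

lemma sseq_pos:
  "0 < n \<Longrightarrow> 0 < p \<Longrightarrow> 0 < q \<Longrightarrow> sseq p q n = sseq p q (n - int p) + sseq p q (n - int q)"
  by (simp add: sseq.simps[of p q n])

lemma sum_lessThan_delay: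
  fixes h :: "nat \<Rightarrow> 'a::comm_monoid_add"
  shows "(\<Sum>j<K. if e \<le> j then h (j - e) else 0) = (\<Sum>i<K - e. h i)"
proof -
  have "{j\<in>{..<K}. e \<le> j} = {e..<K}"
    by auto
  then have "(\<Sum>j<K. if e \<le> j then h (j - e) else 0) = (\<Sum>j = e..<K. h (j - e))"
    by (simp add: sum.inter_filter[symmetric])
  also have "\<dots> = (\<Sum>i<K - e. h i)"
    by (subst sum.atLeastLessThan_shift_0) (simp add: lessThan_atLeast0)
  finally show ?thesis .
qed

lemma sseq_mult_step_0:
  assumes "0 < k"
  shows "sseq 1 (m + 2) k * sseq 1 (m + 2) (k - 1) =
    (sseq 1 (m + 2) (k - 1))\<^sup>2 + sseq 1 (m + 2) (k - 1) * sseq 1 (m + 2) (k - 1 - int m - 1)"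
  using assms by (simp add: sseq_pos algebra_simps power2_eq_square)

lemma sseq_mult_step:
  assumes "0 < k" "1 \<le> e" "e \<le> m"
  shows "sseq 1 (m + 2) k * sseq 1 (m + 2) (k - int e - 1) =
    sseq 1 (m + 2) (k - 1) * sseq 1 (m + 2) (k - 1 - int (e - 1) - 1)
    + sseq 1 (m + 2) (k - int e - 1) * sseq 1 (m + 2) (k - int e - 1 - int (m - e) - 1)"
  using assms by (simp add: sseq_pos algebra_simps of_nat_diff)

lemma sseq_mult_eq_sum_hole_count:
  fixes m e K :: nat and k :: int
  assumes "e \<le> m" "k \<le> int K"
  shows "sseq 1 (m + 2) k * sseq 1 (m + 2) (k - int e - 1) =
    (\<Sum>j<K. hole_count m e j * (sseq 1 (m + 2) (k - 1 - int j))\<^sup>2)"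
  using assms
proof (induction "nat (k + 1)" arbitrary: k e K rule: less_induct)
  case less
  let ?s = "sseq 1 (m + 2)"
  show ?case
  proof (cases "k \<le> 0")
    case True
    then show ?thesis
      by (simp add: sseq_neg)
  next
    case False
    then have k: "0 < k"
      by simp
    then obtain K' where K: "K = Suc K'" and K': "k - 1 \<le> int K'"
      using less.prems by (cases K) auto
    have RHS: "(\<Sum>j<K. hole_count m e j * (?s (k - 1 - int j))\<^sup>2) =
        hole_count m e 0 * (?s (k - 1))\<^sup>2
        + (\<Sum>j<K'. hole_count m e (Suc j) * (?s (k - 2 - int j))\<^sup>2)"
      unfolding K sum.lessThan_Suc_shift by (simp add: algebra_simps)
    consider (zero) "e = 0" | (pos) "1 \<le> e"
      by linarith
    then show ?thesis
    proof cases
      case zero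
      have IH: "?s (k - 1) * ?s (k - 1 - int m - 1) =
          (\<Sum>j<K'. hole_count m m j * (?s (k - 1 - 1 - int j))\<^sup>2)"
        by (rule less.hyps) (use k K' in auto)
      show ?thesis
        unfolding RHS using sseq_mult_step_0[OF k, of m] IH zero
        by (simp add: hole_count_0 hole_count_0_Suc algebra_simps)
    next
      case pos
      have IH1: "?s (k - 1) * ?s (k - 1 - int (e - 1) - 1) =
          (\<Sum>j<K'. hole_count m (e - 1) j * (?s (k - 1 - 1 - int j))\<^sup>2)"
        by (rule less.hyps) (use k K' less.prems in auto)
      have IH2: "?s (k - int e - 1) * ?s (k - int e - 1 - int (m - e) - 1) =
          (\<Sum>j<K' - e. hole_count m (m - e) j * (?s (k - int e - 1 - 1 - int j))\<^sup>2)"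
        by (rule less.hyps) (use k K' less.prems in auto)
      have delayed: "(\<Sum>j<K' - e. hole_count m (m - e) j * (?s (k - int e - 1 - 1 - int j))\<^sup>2) =
          (\<Sum>j<K'. if e \<le> j then hole_count m (m - e) (j - e) * (?s (k - 2 - int j))\<^sup>2 else 0)"
        unfolding sum_lessThan_delay[symmetric]
        by (rule sum.cong) (auto simp: of_nat_diff algebra_simps)
      have "?s k * ?s (k - int e - 1) = (\<Sum>j<K'.
          (hole_count m (e - 1) j + (if e \<le> j then hole_count m (m - e) (j - e) else 0))
          * (?s (k - 2 - int j))\<^sup>2)"
        unfolding sseq_mult_step[OF k pos less.prems(1)] IH1 IH2 delayed sum.distrib[symmetric]
        by (rule sum.cong) (auto simp: algebra_simps)
      also have "\<dots> = (\<Sum>j<K. hole_count m e j * (?s (k - 1 - int j))\<^sup>2)"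
        unfolding RHS using pos less.prems by (simp add: hole_count_0 hole_count_Suc)
      finally show ?thesis .
    qed
  qed
qed

lemma sseq_cross_term:
  fixes m n :: nat
  shows "sseq 1 (m + 2) (int n - 1) * sseq 1 (m + 2) (int n - int m - 2) =
    (\<Sum>l = m + 2..n. Pperm {-2, -1, int m} (l - 1) * (sseq 1 (m + 2) (int n - int l))\<^sup>2)"
proof -
  let ?s = "sseq 1 (m + 2)"
  have "?s (int n - 1) * ?s (int n - int m - 2) =
      (\<Sum>j<n - 1. hole_count m m j * (?s (int n - 2 - int j))\<^sup>2)"
    using sseq_mult_eq_sum_hole_count[of m m "int n - 1" "n - 1"] by (simp add: algebra_simps)
  also have "\<dots> = (\<Sum>j = m..<n - 1. hole_count m m j * (?s (int n - 2 - int j))\<^sup>2)"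
    by (rule sum.mono_neutral_right) (auto simp: hole_count_eq_0)
  also have "\<dots> = (\<Sum>l = m + 2..n. hole_count m m (l - 2) * (?s (int n - int l))\<^sup>2)"
    by (rule sum.reindex_bij_witness[where i = "\<lambda>l. l - 2" and j = "\<lambda>j. j + 2"])
      (auto simp: of_nat_diff algebra_simps)
  also have "\<dots> = (\<Sum>l = m + 2..n. Pperm {-2, -1, int m} (l - 1) * (?s (int n - int l))\<^sup>2)"
  proof (rule sum.cong)
    fix l assume "l \<in> {m + 2..n}"
    then have "l - 1 = Suc (l - 2)"
      by auto
    then show "hole_count m m (l - 2) * (?s (int n - int l))\<^sup>2 =
        Pperm {-2, -1, int m} (l - 1) * (?s (int n - int l))\<^sup>2"
      by (simp add: Pperm_eq_hole_count)
  qed simp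
  finally show ?thesis .
qed

theorem mainTheorem6:
  fixes m n :: nat
  shows "(sseq 1 (m + 2) (int n))^2 =
           (if n = 0 then 1 else 0)
           + (sseq 1 (m + 2) (int n - 1))^2
           + (sseq 1 (m + 2) (int n - int m - 2))^2
           + 2 * (\<Sum>l = m + 2..n. Pperm {-2, -1, int m} (l - 1) * (sseq 1 (m + 2) (int n - int l))^2)"
proof (cases "n = 0")
  case True
  then show ?thesis
    by (simp add: sseq_0 sseq_neg)
next
  case False
  then have "sseq 1 (m + 2) (int n) =
      sseq 1 (m + 2) (int n - 1) + sseq 1 (m + 2) (int n - int m - 2)"
    by (simp add: sseq_pos algebra_simps)
  then show ?thesis
    using False sseq_cross_term[of m n] by (simp add: power2_sum)
qed

end
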